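(* Let $D$ be a pv-monoid (idempotent, with symmetric valuation function), $P$ a nonempty finite set of ports and $\zeta\in PCL(D,P)$. Then for every $\gamma\in C(P)$, \[\|\sim\zeta\|(\gamma)=\bigoplus_{\gamma'\in C(P),\ \gamma'\subseteq\gamma}\|\zeta\|(\gamma').\]
   Context: A valuation monoid $(D,\oplus,\mathrm{val},0)$ consists of a commutative monoid $(D,\oplus,0)$ and a map $\mathrm{val}:D^+\to D$ ($D^+$ = nonempty finite sequences over $D$) with $\mathrm{val}(d)=d$ and $\mathrm{val}(d_1,\dots,d_n)=0$ whenever some $d_i=0$. A pv-monoid $(D,\oplus,\mathrm{val},\otimes,0,1)$ is a valuation monoid with a binary operation $\otimes$ and an element $1$ such that $\mathrm{val}(1,\dots,1)=1$ for any $n\ge1$ arguments, $0\otimes d=d\otimes0=0$, $1\otimes d=d\otimes1=d$. Standing assumption: $D$ is idempotent ($d\oplus d=d$) and $\mathrm{val}$ is symmetric. $I(P)$ is the set of nonempty subsets of $P$, $C(P)$ the set of nonempty subsets of $I(P)$. PIL formulas: $\phi::=true\mid p\mid\overline{\phi}\mid\phi\vee\phi$ ($p\in P$), $\alpha\models_i p$ iff $p\in\alpha$, other connectives as usual. PCL formulas: $f::=true\mid\phi\mid\neg f\mid f\sqcup f\mid f+f$; $\gamma\models\phi$ iff every $\alpha\in\gamma$ satisfies $\phi$; $\neg,\sqcup$ are complement and union; $\gamma\models f_1+f_2$ iff $\gamma=\gamma_1\cup\gamma_2$ with $\gamma_1,\gamma_2\in C(P)$, $\gamma_1\models f_1,\gamma_2\models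 f_2$. w$_{\text{pvm}}$PCL formulas ($PCL(D,P)$): $\zeta::=d\mid f\mid\zeta\oplus\zeta\mid\zeta\otimes\zeta\mid\zeta\uplus\zeta\mid *\zeta$; semantics $\|\zeta\|:C(P)\to D$: $\|d\|(\gamma)=d$; $\|f\|(\gamma)\in\{0,1\}$ is $1$ iff $\gamma\models f$; $\oplus,\otimes$ pointwise; $\|\zeta_1\uplus\zeta_2\|(\gamma)=\bigoplus(\|\zeta_1\|(\gamma_1)\otimes\|\zeta_2\|(\gamma_2))$ over disjoint $\gamma_1,\gamma_2\in C(P)$ with union $\gamma$; $\|*\zeta\|(\gamma)=\bigoplus_{n>0}\bigoplus\mathrm{val}(\|\zeta\|(\gamma_1),\dots,\|\zeta\|(\gamma_n))$ over pairwise disjoint $\gamma_1,\dots,\gamma_n\in C(P)$ with union $\gamma$. The closure is $\sim\zeta:=\zeta\oplus(\zeta\uplus 1)$. *)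

theory Defs
  imports "HOL-Library.Multiset"
begin

record 'd pvm =
  pplus  :: "'d \<Rightarrow> 'd \<Rightarrow> 'd"
  pval   :: "'d list \<Rightarrow> 'd"
  ptimes :: "'d \<Rightarrow> 'd \<Rightarrow> 'd"
  pzero  :: 'd
  pone   :: 'd

definition valuation_monoid :: "'d pvm \<Rightarrow> bool" where
  "valuation_monoid D \<longleftrightarrow>
     (\<forall>a b c. pplus D (pplus D a b) c = pplus D a (pplus D b c)) \<and>
     (\<forall>a b. pplus D a b = pplus D b a) \<and>
     (\<forall>a. pplus D (pzero D) a = a) \<and>
     (\<forall>d. pval D [d] = d) \<and>
     (\<forall>ds. ds \<noteq> [] \<and> pzero D \<in> set ds \<longrightarrow> pval D ds = pzero D)"

definition pv_monoid :: "'d pvm \<Rightarrow> bool" where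
  "pv_monoid D \<longleftrightarrow> valuation_monoid D \<and>
     (\<forall>n. n \<ge> 1 \<longrightarrow> pval D (replicate n (pone D)) = pone D) \<and>
     (\<forall>d. ptimes D (pzero D) d = pzero D \<and> ptimes D d (pzero D) = pzero D) \<and>
     (\<forall>d. ptimes D (pone D) d = d \<and> ptimes D d (pone D) = d)"

definition idempotent_pvm :: "'d pvm \<Rightarrow> bool" where
  "idempotent_pvm D \<longleftrightarrow> (\<forall>d. pplus D d d = d)"

definition symmetric_val :: "'d pvm \<Rightarrow> bool" where
  "symmetric_val D \<longleftrightarrow> (\<forall>ds es. ds \<noteq> [] \<and> mset ds = mset es \<longrightarrow> pval D ds = pval D es)"

definition bigplus :: "'d pvm \<Rightarrow> 'i set \<Rightarrow> ('i \<Rightarrow> 'd) \<Rightarrow> 'd" where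
  "bigplus D A f = Finite_Set.fold (\<lambda>x acc. pplus D (f x) acc) (pzero D) A"

definition Ip :: "'p set \<Rightarrow> 'p set set" where
  "Ip P = {a. a \<subseteq> P \<and> a \<noteq> {}}"

definition Cp :: "'p set \<Rightarrow> 'p set set set" where
  "Cp P = {g. g \<subseteq> Ip P \<and> g \<noteq> {}}"

datatype 'p pil = PTrue | PPort 'p | PNeg "'p pil" | POr "'p pil" "'p pil"

primrec pil_sat :: "'p set \<Rightarrow> 'p pil \<Rightarrow> bool" where
  "pil_sat a PTrue = True"
| "pil_sat a (PPort p) = (p \<in> a)"
| "pil_sat a (PNeg \<phi>) = (\<not> pil_sat a \<phi>)"
| "pil_sat a (POr \<phi> \<psi>) = (pil_sat a \<phi> \<or> pil_sat a \<psi>)"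

datatype 'p pcl = CTrue | CPil "'p pil" | CNeg "'p pcl" | CUnion "'p pcl" "'p pcl"
  | CPlus "'p pcl" "'p pcl"

primrec pcl_sat :: "'p set \<Rightarrow> 'p set set \<Rightarrow> 'p pcl \<Rightarrow> bool" where
  "pcl_sat P g CTrue = True"
| "pcl_sat P g (CPil \<phi>) = (\<forall>a\<in>g. pil_sat a \<phi>)"
| "pcl_sat P g (CNeg f) = (\<not> pcl_sat P g f)"
| "pcl_sat P g (CUnion f1 f2) = (pcl_sat P g f1 \<or> pcl_sat P g f2)"
| "pcl_sat P g (CPlus f1 f2) =
     (\<exists>g1 g2. g1 \<in> Cp P \<and> g2 \<in> Cp P \<and> g = g1 \<union> g2 \<and> pcl_sat P g1 f1 \<and> pcl_sat P g2 f2)"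

datatype ('d,'p) wpcl = WConst 'd | WF "'p pcl" | WPlus "('d,'p) wpcl" "('d,'p) wpcl"
  | WTimes "('d,'p) wpcl" "('d,'p) wpcl" | WShuffle "('d,'p) wpcl" "('d,'p) wpcl"
  | WStar "('d,'p) wpcl"

definition decomps :: "'p set \<Rightarrow> 'p set set \<Rightarrow> 'p set set list set" where
  "decomps P g = {gs. gs \<noteq> [] \<and> set gs \<subseteq> Cp P \<and>
      (\<forall>i j. i < j \<and> j < length gs \<longrightarrow> gs ! i \<inter> gs ! j = {}) \<and> \<Union>(set gs) = g}"

primrec wsem :: "'d pvm \<Rightarrow> 'p set \<Rightarrow> ('d,'p) wpcl \<Rightarrow> 'p set set \<Rightarrow> 'd" where
  "wsem D P (WConst d) g = d"
| "wsem D P (WF f) g = (if pcl_sat P g f then pone D else pzero D)"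
| "wsem D P (WPlus z1 z2) g = pplus D (wsem D P z1 g) (wsem D P z2 g)"
| "wsem D P (WTimes z1 z2) g = ptimes D (wsem D P z1 g) (wsem D P z2 g)"
| "wsem D P (WShuffle z1 z2) g =
     bigplus D {(g1, g2). g1 \<in> Cp P \<and> g2 \<in> Cp P \<and> g1 \<inter> g2 = {} \<and> g1 \<union> g2 = g}
       (\<lambda>(g1, g2). ptimes D (wsem D P z1 g1) (wsem D P z2 g2))"
| "wsem D P (WStar z) g =
     bigplus D (decomps P g) (\<lambda>gs. pval D (map (wsem D P z) gs))"

definition wclosure :: "'d pvm \<Rightarrow> ('d,'p) wpcl \<Rightarrow> ('d,'p) wpcl" where
  "wclosure D z = WPlus z (WShuffle z (WConst (pone D)))"

end

theory Submission
  imports Defs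
begin

text \<open>Shuffling with the constant 1 splits \<open>\<gamma>\<close> into a part \<open>\<gamma>\<^sub>1\<close> evaluated by \<open>\<zeta>\<close> and a
  nonempty remainder evaluated to 1; since the remainder is determined by \<open>\<gamma>\<^sub>1\<close>, the
  sum ranges exactly over the proper sub-configurations of \<open>\<gamma>\<close>. Adding \<open>\<zeta>\<close> itself
  contributes the missing summand \<open>\<gamma>' = \<gamma>\<close>.\<close>

lemma valuation_monoid_comm_monoid_set:
  assumes "valuation_monoid D"
  shows "comm_monoid_set (pplus D) (pzero D)"
  by unfold_locales (use assms in \<open>auto simp: valuation_monoid_def\<close>)

lemma bigplus_eq_comm_monoid_set_F:
  assumes "valuation_monoid D"
  shows "bigplus D A f = comm_monoid_set.F (pplus D) (pzero D) f A"
proof -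
  interpret comm_monoid_set "pplus D" "pzero D"
    using assms by (rule valuation_monoid_comm_monoid_set)
  show ?thesis by (simp add: bigplus_def eq_fold comp_def)
qed

lemma bigplus_insert:
  assumes "valuation_monoid D" and "finite A" and "x \<notin> A"
  shows "bigplus D (insert x A) f = pplus D (f x) (bigplus D A f)"
proof -
  interpret comm_monoid_set "pplus D" "pzero D"
    using assms(1) by (rule valuation_monoid_comm_monoid_set)
  show ?thesis using assms by (simp add: bigplus_eq_comm_monoid_set_F)
qed

lemma bigplus_reindex:
  assumes "valuation_monoid D" and "inj_on h A"
  shows "bigplus D (h ` A) f = bigplus D A (f \<circ> h)"
proof -
  interpret comm_monoid_set "pplus D" "pzero D"
    using assms(1) by (rule valuation_monoid_comm_monoid_set)
  show ?thesis using assms by (simp add: bigplus_eq_comm_monoid_set_F reindex)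
qed

lemma finite_Cp:
  assumes "finite P"
  shows "finite (Cp P)"
  by (rule finite_subset[of _ "Pow (Pow P)"]) (use assms in \<open>auto simp: Cp_def Ip_def\<close>)

lemma fst_disjoint_splittings_Cp:
  assumes "g \<in> Cp P"
  shows "fst ` {(g1, g2). g1 \<in> Cp P \<and> g2 \<in> Cp P \<and> g1 \<inter> g2 = {} \<and> g1 \<union> g2 = g}
           = {g'. g' \<in> Cp P \<and> g' \<subset> g}"
    (is "fst ` ?S = ?T")
proof
  show "fst ` ?S \<subseteq> ?T"
    by (auto simp: Cp_def) blast
  show "?T \<subseteq> fst ` ?S"
  proof
    fix g1 assume "g1 \<in> ?T"
    then have "(g1, g - g1) \<in> ?S" using assms by (auto simp: Cp_def)
    then show "g1 \<in> fst ` ?S" by force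
  qed
qed

lemma wsem_shuffle_one:
  assumes "pv_monoid D" and "g \<in> Cp P"
  shows "wsem D P (WShuffle z (WConst (pone D))) g
           = bigplus D {g'. g' \<in> Cp P \<and> g' \<subset> g} (wsem D P z)"
proof -
  let ?S = "{(g1, g2). g1 \<in> Cp P \<and> g2 \<in> Cp P \<and> g1 \<inter> g2 = {} \<and> g1 \<union> g2 = g}"
  have vm: "valuation_monoid D" and one: "\<And>d. ptimes D d (pone D) = d"
    using assms(1) by (simp_all add: pv_monoid_def)
  have "inj_on fst ?S" by (auto simp: inj_on_def)
  have "wsem D P (WShuffle z (WConst (pone D))) g = bigplus D ?S (\<lambda>(g1, g2). wsem D P z g1)"
    by (simp add: one)
  also have "\<dots> = bigplus D ?S (wsem D P z \<circ> fst)"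
    by (rule arg_cong[where f = "bigplus D ?S"]) auto
  also have "\<dots> = bigplus D (fst ` ?S) (wsem D P z)"
    using bigplus_reindex[OF vm \<open>inj_on fst ?S\<close>] by simp
  finally show ?thesis
    by (simp only: fst_disjoint_splittings_Cp[OF assms(2)])
qed

theorem mainTheorem9:
  fixes D :: "'d pvm" and P :: "'p set" and z :: "('d,'p) wpcl" and g :: "'p set set"
  assumes "pv_monoid D" and "idempotent_pvm D" and "symmetric_val D"
    and "finite P" and "P \<noteq> {}"
    and "g \<in> Cp P"
  shows "wsem D P (wclosure D z) g = bigplus D {g'. g' \<in> Cp P \<and> g' \<subseteq> g} (wsem D P z)"
proof -
  let ?T = "{g'. g' \<in> Cp P \<and> g' \<subset> g}"
  have vm: "valuation_monoid D" using assms(1) by (simp add: pv_monoid_def)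
  have "finite ?T" using finite_Cp[OF assms(4)] by (rule finite_subset[rotated]) auto
  have "{g'. g' \<in> Cp P \<and> g' \<subseteq> g} = insert g ?T" using assms(6) by auto
  then have "bigplus D {g'. g' \<in> Cp P \<and> g' \<subseteq> g} (wsem D P z)
               = pplus D (wsem D P z g) (bigplus D ?T (wsem D P z))"
    using bigplus_insert[OF vm \<open>finite ?T\<close>] by simp
  then show ?thesis
    unfolding wclosure_def wsem.simps(3) wsem_shuffle_one[OF assms(1,6)] by simp
qed

end
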